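(* Let $1\le p<\infty$, $\Omega=\mathbb K^{\mathbb Z_+}$, let $\mu=\bigotimes_{n\ge0}\mu_n$ be a product of Borel probability measures on $\mathbb K$, and let $\mathbf w$ be a sequence of non-zero scalars with $\sum_{n=1}^\infty\frac1{|w_1\cdots w_n|^p}<\infty$. If $\mu$ is $B_{\mathbf w}$-invariant and $\int_{\mathbb K}|t|^p\,d\mu_0(t)<\infty$, then $\mu(\ell_p(\mathbb Z_+))=1$.
   Context: $\mathbb K\in\{\mathbb R,\mathbb C\}$; $\Omega$ has the product topology and Borel $\sigma$-algebra, and $\ell_p(\mathbb Z_+)$ is a Borel subset of it. $B_{\mathbf w}:\Omega\to\Omega$ is $(B_{\mathbf w}t)_j=w_{j+1}t_{j+1}$; invariance means $\mu(B_{\mathbf w}^{-1}B)=\mu(B)$ for Borel $B$. *)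

theory Defs
  imports "HOL-Probability.Probability"
begin

definition weighted_backward_shift :: "(nat \<Rightarrow> 'k::real_normed_field) \<Rightarrow> (nat \<Rightarrow> 'k) \<Rightarrow> (nat \<Rightarrow> 'k)" where
  "weighted_backward_shift w t = (\<lambda>j. w (Suc j) * t (Suc j))"

definition lp_seq :: "real \<Rightarrow> (nat \<Rightarrow> 'k::real_normed_vector) set" where
  "lp_seq p = {x. summable (\<lambda>n. norm (x n) powr p)}"

end

theory Submission
  imports Defs
begin

text \<open>An invariant measure gives every coordinate the same law as the next one rescaled by the
  weight, so \<open>E|t_n|^p = E|t_0|^p / |w_1 \<cdots> w_n|^p\<close>. Summing over \<open>n\<close>, the weight condition
  makes \<open>E \<Sum>\<^sub>n |t_n|^p\<close> finite, hence \<open>\<Sum>\<^sub>n |t_n|^p < \<infinity>\<close> almost surely. Only the law of the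
  coordinate \<open>t_0\<close> and the invariance are used, not the product structure, and \<open>p \<ge> 1\<close> is not
  needed.\<close>

lemma distr_eq_if_emeasure_vimage_eq:
  assumes T: "T \<in> measurable M M"
    and inv: "\<And>B. B \<in> sets M \<Longrightarrow> emeasure M (T -` B \<inter> space M) = emeasure M B"
  shows "distr M M T = M"
  by (rule measure_eqI) (simp_all add: emeasure_distr T inv)

lemma nn_integral_PiM_component:
  assumes prob: "\<And>i. i \<in> I \<Longrightarrow> prob_space (M i)"
    and i: "i \<in> I"
    and f: "f \<in> borel_measurable (M i)"
  shows "(\<integral>\<^sup>+ x. f (x i) \<partial>PiM I M) = (\<integral>\<^sup>+ t. f t \<partial>M i)"
proof -
  have "(\<integral>\<^sup>+ x. f (x i) \<partial>PiM I M) = (\<integral>\<^sup>+ t. f t \<partial>distr (PiM I M) (M i) (\<lambda>x. x i))"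
    using f i by (intro nn_integral_distr[symmetric] measurable_component_singleton) simp_all
  also have "\<dots> = (\<integral>\<^sup>+ t. f t \<partial>M i)"
    using prob i by (simp only: distr_PiM_component)
  finally show ?thesis .
qed

lemma measurable_weighted_backward_shift:
  fixes M :: "(nat \<Rightarrow> 'k::{real_normed_field, second_countable_topology}) measure"
  assumes sets_M: "sets M = sets (\<Pi>\<^sub>M n\<in>UNIV. borel)"
  shows "weighted_backward_shift w \<in> measurable M M"
  unfolding measurable_cong_sets[OF sets_M sets_M] weighted_backward_shift_def
  by (rule measurable_PiM_single') (auto simp: space_PiM)

lemma nn_integral_norm_powr_coordinate_Suc:
  fixes M :: "(nat \<Rightarrow> 'k::{real_normed_field, second_countable_topology}) measure"
  assumes sets_M: "sets M = sets (\<Pi>\<^sub>M n\<in>UNIV. borel)"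
    and inv: "distr M M (weighted_backward_shift w) = M"
  shows "(\<integral>\<^sup>+ x. ennreal (norm (x j) powr p) \<partial>M)
    = ennreal (norm (w (Suc j)) powr p) * (\<integral>\<^sup>+ x. ennreal (norm (x (Suc j)) powr p) \<partial>M)"
proof -
  have coord: "(\<lambda>x. x n) \<in> borel_measurable M" for n
    unfolding measurable_cong_sets[OF sets_M refl] by simp
  have "(\<integral>\<^sup>+ x. ennreal (norm (x j) powr p) \<partial>M)
      = (\<integral>\<^sup>+ x. ennreal (norm (x j) powr p) \<partial>distr M M (weighted_backward_shift w))"
    by (simp only: inv)
  also have "\<dots> = (\<integral>\<^sup>+ x. ennreal (norm (weighted_backward_shift w x j) powr p) \<partial>M)"
    by (rule nn_integral_distr[OF measurable_weighted_backward_shift[OF sets_M]])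
      (use coord in measurable)
  also have "\<dots> = (\<integral>\<^sup>+ x. ennreal (norm (w (Suc j)) powr p) * ennreal (norm (x (Suc j)) powr p) \<partial>M)"
    by (simp add: weighted_backward_shift_def norm_mult powr_mult ennreal_mult)
  also have "\<dots> = ennreal (norm (w (Suc j)) powr p) * (\<integral>\<^sup>+ x. ennreal (norm (x (Suc j)) powr p) \<partial>M)"
    using coord by (intro nn_integral_cmult) measurable
  finally show ?thesis .
qed

lemma nn_integral_norm_powr_coordinate:
  fixes M :: "(nat \<Rightarrow> 'k::{real_normed_field, second_countable_topology}) measure"
  assumes sets_M: "sets M = sets (\<Pi>\<^sub>M n\<in>UNIV. borel)"
    and inv: "distr M M (weighted_backward_shift w) = M"
    and w_nz: "\<And>n. n \<ge> 1 \<Longrightarrow> w n \<noteq> 0"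
  shows "(\<integral>\<^sup>+ x. ennreal (norm (x n) powr p) \<partial>M)
    = ennreal (1 / norm (\<Prod>i=1..n. w i) powr p) * (\<integral>\<^sup>+ x. ennreal (norm (x 0) powr p) \<partial>M)"
proof (induction n)
  case 0
  then show ?case by simp
next
  case (Suc n)
  let ?I = "\<lambda>n. \<integral>\<^sup>+ x. ennreal (norm (x n) powr p) \<partial>M"
  define a where "a = norm (w (Suc n)) powr p"
  have a_pos: "a > 0"
    using w_nz[of "Suc n"] by (simp add: a_def)
  have prod_Suc: "1 / norm (\<Prod>i=1..Suc n. w i) powr p = 1 / a * (1 / norm (\<Prod>i=1..n. w i) powr p)"
    by (simp add: a_def prod.nat_ivl_Suc' norm_mult powr_mult)
  have "?I (Suc n) = ennreal (1 / a) * ennreal a * ?I (Suc n)"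
    using a_pos by (simp flip: ennreal_mult)
  also have "\<dots> = ennreal (1 / a) * ?I n"
    unfolding nn_integral_norm_powr_coordinate_Suc[OF sets_M inv, of n] a_def by (simp add: mult.assoc)
  also have "\<dots> = ennreal (1 / a) * ennreal (1 / norm (\<Prod>i=1..n. w i) powr p) * ?I 0"
    by (simp add: Suc.IH mult.assoc)
  also have "\<dots> = ennreal (1 / norm (\<Prod>i=1..Suc n. w i) powr p) * ?I 0"
    unfolding prod_Suc using a_pos by (subst ennreal_mult) auto
  finally show ?case .
qed

lemma lp_seq_eq_suminf_ennreal_not_top:
  "lp_seq p = {x. (\<Sum>n. ennreal (norm (x n) powr p)) \<noteq> \<infinity>}"
  unfolding lp_seq_def
  by (auto simp: suminf_ennreal2 intro: summable_suminf_not_top)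

lemma emeasure_lp_seq_eq_1_if_moments_summable:
  fixes M :: "(nat \<Rightarrow> 'k::{real_normed_vector, second_countable_topology}) measure"
  assumes "prob_space M"
    and sets_M: "sets M = sets (\<Pi>\<^sub>M n\<in>UNIV. borel)"
    and moments: "(\<Sum>n. \<integral>\<^sup>+ x. ennreal (norm (x n) powr p) \<partial>M) < \<infinity>"
  shows "emeasure M (lp_seq p) = 1"
proof -
  interpret prob_space M by fact
  have coord: "(\<lambda>x. x n) \<in> borel_measurable M" for n
    unfolding measurable_cong_sets[OF sets_M refl] by simp
  have space_M: "space M = UNIV"
    using sets_eq_imp_space_eq[OF sets_M] by (simp add: space_PiM)
  have meas: "(\<lambda>x. \<Sum>n. ennreal (norm (x n) powr p)) \<in> borel_measurable M"
    using coord by measurable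
  have "(\<integral>\<^sup>+ x. (\<Sum>n. ennreal (norm (x n) powr p)) \<partial>M) = (\<Sum>n. \<integral>\<^sup>+ x. ennreal (norm (x n) powr p) \<partial>M)"
    using coord by (intro nn_integral_suminf) measurable
  with moments have AE_finite: "AE x in M. (\<Sum>n. ennreal (norm (x n) powr p)) \<noteq> \<infinity>"
    by (intro nn_integral_noteq_infinite meas) simp
  have lp_seq_eq: "lp_seq p = {x \<in> space M. (\<Sum>n. ennreal (norm (x n) powr p)) \<noteq> \<infinity>}"
    by (simp add: space_M lp_seq_eq_suminf_ennreal_not_top)
  show ?thesis
    unfolding lp_seq_eq
  proof (rule emeasure_eq_1_AE)
    show "{x \<in> space M. (\<Sum>n. ennreal (norm (x n) powr p)) \<noteq> \<infinity>} \<in> sets M"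
      using meas by measurable
    show "AE x in M. x \<in> {x \<in> space M. (\<Sum>n. ennreal (norm (x n) powr p)) \<noteq> \<infinity>}"
      using AE_finite by (auto simp: space_M)
  qed
qed

theorem emeasure_lp_seq_eq_1_if_shift_invariant:
  fixes M :: "(nat \<Rightarrow> 'k::{real_normed_field, second_countable_topology}) measure"
  assumes "prob_space M"
    and sets_M: "sets M = sets (\<Pi>\<^sub>M n\<in>UNIV. borel)"
    and inv: "distr M M (weighted_backward_shift w) = M"
    and w_nz: "\<And>n. n \<ge> 1 \<Longrightarrow> w n \<noteq> 0"
    and w_sum: "summable (\<lambda>n. 1 / norm (\<Prod>i=1..n. w i) powr p)"
    and moment: "(\<integral>\<^sup>+ x. ennreal (norm (x 0) powr p) \<partial>M) < \<infinity>"
  shows "emeasure M (lp_seq p) = 1"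
proof (rule emeasure_lp_seq_eq_1_if_moments_summable[OF \<open>prob_space M\<close> sets_M])
  let ?m = "\<integral>\<^sup>+ x. ennreal (norm (x 0) powr p) \<partial>M"
  have "(\<Sum>n. \<integral>\<^sup>+ x. ennreal (norm (x n) powr p) \<partial>M) = (\<Sum>n. ennreal (1 / norm (\<Prod>i=1..n. w i) powr p)) * ?m"
    unfolding ennreal_suminf_multc[symmetric]
    by (intro arg_cong[where f=suminf] ext nn_integral_norm_powr_coordinate[OF sets_M inv w_nz])
  also have "\<dots> = ennreal (\<Sum>n. 1 / norm (\<Prod>i=1..n. w i) powr p) * ?m"
    using w_sum by (simp add: suminf_ennreal2)
  also have "\<dots> < \<infinity>"
    using moment by (simp add: ennreal_mult_less_top)
  finally show "(\<Sum>n. \<integral>\<^sup>+ x. ennreal (norm (x n) powr p) \<partial>M) < \<infinity>" .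
qed

theorem corollary5p4:
  fixes p :: real
    and \<mu> :: "nat \<Rightarrow> ('k::{real_normed_field, banach, second_countable_topology}) measure"
    and w :: "nat \<Rightarrow> 'k"
  assumes p: "1 \<le> p"
    and prob: "\<And>n. prob_space (\<mu> n)"
    and borel: "\<And>n. sets (\<mu> n) = sets borel"
    and w_nz: "\<And>n. n \<ge> 1 \<Longrightarrow> w n \<noteq> 0"
    and w_sum: "summable (\<lambda>n. 1 / norm (\<Prod>i=1..Suc n. w i) powr p)"
    and inv: "\<And>B. B \<in> sets (PiM UNIV \<mu>) \<Longrightarrow>
       emeasure (PiM UNIV \<mu>) (weighted_backward_shift w -` B \<inter> space (PiM UNIV \<mu>))
         = emeasure (PiM UNIV \<mu>) B"
    and moment: "(\<integral>\<^sup>+ t. ennreal (norm t powr p) \<partial>(\<mu> 0)) < \<infinity>"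
  shows "emeasure (PiM UNIV \<mu>) (lp_seq p) = 1"
proof (rule emeasure_lp_seq_eq_1_if_shift_invariant)
  show "prob_space (PiM UNIV \<mu>)"
    using prob by (intro prob_space_PiM) auto
  show sets_M: "sets (PiM UNIV \<mu>) = sets (\<Pi>\<^sub>M n\<in>UNIV. borel)"
    using borel by (intro sets_PiM_cong) auto
  show "distr (PiM UNIV \<mu>) (PiM UNIV \<mu>) (weighted_backward_shift w) = PiM UNIV \<mu>"
    using measurable_weighted_backward_shift[OF sets_M] inv by (rule distr_eq_if_emeasure_vimage_eq)
  show "summable (\<lambda>n. 1 / norm (\<Prod>i=1..n. w i) powr p)"
    using w_sum by (subst summable_Suc_iff[symmetric]) simp
  have f_meas: "(\<lambda>t. ennreal (norm t powr p)) \<in> borel_measurable (\<mu> 0)"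
    unfolding measurable_cong_sets[OF borel refl] by measurable
  have "(\<integral>\<^sup>+ x. ennreal (norm (x 0) powr p) \<partial>PiM UNIV \<mu>) = (\<integral>\<^sup>+ t. ennreal (norm t powr p) \<partial>\<mu> 0)"
    using prob f_meas by (intro nn_integral_PiM_component) auto
  with moment show "(\<integral>\<^sup>+ x. ennreal (norm (x 0) powr p) \<partial>PiM UNIV \<mu>) < \<infinity>"
    by simp
qed (fact w_nz)

end
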